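(* Let $P$ be a poset on $[n]$ with natural labeling. Let $G$ be the digraph with vertex set $\mathcal{L}(P)$ having an edge $\pi\to\pi'$ if and only if $\pi'=\pi\partial_j$ for some $j\in[n]$ (respectively, $\pi'=\pi\tau_j$ for some $j\in[n-1]$). Then $G$ is strongly connected.
   Context: $\mathcal{L}(P)=\{\pi\in S_n : i\prec j \Rightarrow \pi^{-1}_i<\pi^{-1}_j\}$ in one-line notation $\pi=\pi_1\cdots\pi_n$. $\pi\tau_i$ ($1\le i<n$) swaps $\pi_i,\pi_{i+1}$ if they are incomparable in $P$ and is $\pi$ otherwise; operators act on the right, $\pi(\sigma\tau)=(\pi\sigma)\tau$; $\partial_j=\tau_j\tau_{j+1}\cdots\tau_{n-1}$ for $1\le j\le n$. *)

theory Defs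
  imports Main
begin

text \<open>A poset on [n] = {1..n} is a relation P (pairs (i,j) meaning i \<preceq> j)
  with partial_order_on {1..n} P.  Permutations in one-line notation are lists.\<close>

definition natural_labeling :: "nat \<Rightarrow> (nat \<times> nat) set \<Rightarrow> bool" where
  "natural_labeling n P \<longleftrightarrow> (\<forall>i j. (i, j) \<in> P \<and> i \<noteq> j \<longrightarrow> i < j)"

definition incomparable :: "(nat \<times> nat) set \<Rightarrow> nat \<Rightarrow> nat \<Rightarrow> bool" where
  "incomparable P a b \<longleftrightarrow> (a, b) \<notin> P \<and> (b, a) \<notin> P"

text \<open>Linear extensions: permutations pi of [n] with i \<prec> j implying pi^{-1}(i) < pi^{-1}(j);
  stated via positions: if entry at position p precedes entry at position q in P, then p < q.\<close>
definition lin_ext :: "nat \<Rightarrow> (nat \<times> nat) set \<Rightarrow> nat list set" where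
  "lin_ext n P = {\<pi>. distinct \<pi> \<and> set \<pi> = {1..n} \<and>
     (\<forall>p<length \<pi>. \<forall>q<length \<pi>. (\<pi> ! p, \<pi> ! q) \<in> P \<and> \<pi> ! p \<noteq> \<pi> ! q \<longrightarrow> p < q)}"

text \<open>tau_i (1-based position i, 1 \<le> i < n): swap entries at positions i, i+1 if incomparable.\<close>
definition tau :: "(nat \<times> nat) set \<Rightarrow> nat \<Rightarrow> nat list \<Rightarrow> nat list" where
  "tau P i \<pi> =
     (if 1 \<le> i \<and> i < length \<pi> \<and> incomparable P (\<pi> ! (i - 1)) (\<pi> ! i)
      then \<pi>[i - 1 := \<pi> ! i, i := \<pi> ! (i - 1)] else \<pi>)"

text \<open>partial_j = tau_j tau_{j+1} ... tau_{n-1}, acting on the right: first tau_j, then tau_{j+1}, ...\<close>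
definition promo :: "nat \<Rightarrow> (nat \<times> nat) set \<Rightarrow> nat \<Rightarrow> nat list \<Rightarrow> nat list" where
  "promo n P j \<pi> = fold (tau P) [j..<n] \<pi>"

definition promo_edges :: "nat \<Rightarrow> (nat \<times> nat) set \<Rightarrow> (nat list \<times> nat list) set" where
  "promo_edges n P = {(\<pi>, \<pi>'). \<pi> \<in> lin_ext n P \<and> \<pi>' \<in> lin_ext n P \<and>
      (\<exists>j\<in>{1..n}. \<pi>' = promo n P j \<pi>)}"

definition tau_edges :: "nat \<Rightarrow> (nat \<times> nat) set \<Rightarrow> (nat list \<times> nat list) set" where
  "tau_edges n P = {(\<pi>, \<pi>'). \<pi> \<in> lin_ext n P \<and> \<pi>' \<in> lin_ext n P \<and>
      (\<exists>j\<in>{1..<n}. \<pi>' = tau P j \<pi>)}"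

definition strongly_connected_on :: "'a set \<Rightarrow> ('a \<times> 'a) set \<Rightarrow> bool" where
  "strongly_connected_on V E \<longleftrightarrow> (\<forall>x\<in>V. \<forall>y\<in>V. (x, y) \<in> E\<^sup>*)"

end

theory Submission
  imports Defs
begin

text \<open>Every \<open>\<tau>\<close>-step is reversible, so for the \<open>\<tau>\<close>-graph it suffices to reach the identity
  permutation from every linear extension: swapping an adjacent descent is always allowed for a
  natural labeling, and it strictly increases the weight \<open>\<Sum>\<^sub>p p \<cdot> \<pi>\<^sub>p\<close>, so bubble sort terminates.
  For the \<open>\<partial>\<close>-graph, \<open>\<partial>\<^sub>j = \<tau>\<^sub>j \<partial>\<^sub>j\<^sub>+\<^sub>1\<close> with \<open>\<partial>\<^sub>j\<^sub>+\<^sub>1\<close> injective on the finite set of linear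
  extensions; iterating \<open>\<partial>\<^sub>j\<^sub>+\<^sub>1\<close> along its orbit leads from \<open>\<pi>\<partial>\<^sub>j\<close> back to \<open>\<pi>\<tau>\<^sub>j\<close>, so every
  \<open>\<tau>\<close>-edge is a path in the \<open>\<partial>\<close>-graph.\<close>

lemma tau_tau [simp]: "tau P i (tau P i \<pi>) = \<pi>"
  unfolding tau_def incomparable_def
  by (auto simp: nth_list_update list_update_swap)

lemma fold_tau_rev_fold_tau: "fold (tau P) (rev l) (fold (tau P) l \<pi>) = \<pi>"
  by (induction l arbitrary: \<pi>) simp_all

lemma inj_fold_tau: "inj (fold (tau P) l)"
  by (rule inj_on_inverseI[where g = "fold (tau P) (rev l)"]) (rule fold_tau_rev_fold_tau)

lemma length_lin_ext: "\<pi> \<in> lin_ext n P \<Longrightarrow> length \<pi> = n"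
  unfolding lin_ext_def using distinct_card by fastforce

lemma finite_lin_ext: "finite (lin_ext n P)"
proof (rule finite_subset)
  show "lin_ext n P \<subseteq> {\<pi>. set \<pi> \<subseteq> {1..n} \<and> length \<pi> = n}"
    using length_lin_ext unfolding lin_ext_def by blast
  show "finite {\<pi>. set \<pi> \<subseteq> {1..n} \<and> length \<pi> = n}"
    by (rule finite_lists_length_eq) simp
qed

lemma tau_in_lin_ext:
  assumes \<pi>: "\<pi> \<in> lin_ext n P"
  shows "tau P i \<pi> \<in> lin_ext n P"
proof (cases "1 \<le> i \<and> i < length \<pi> \<and> incomparable P (\<pi> ! (i - 1)) (\<pi> ! i)")
  case False
  then have "tau P i \<pi> = \<pi>" unfolding tau_def by (rule if_not_P)
  with \<pi> show ?thesis by simp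
next
  case True
  then obtain k where i: "i = Suc k" and k: "Suc k < length \<pi>"
    by (metis Suc_pred' less_le_trans zero_less_one)
  have incomp: "(\<pi> ! k, \<pi> ! Suc k) \<notin> P" "(\<pi> ! Suc k, \<pi> ! k) \<notin> P"
    using True i by (auto simp: incomparable_def)
  define \<sigma> where "\<sigma> = \<pi>[k := \<pi> ! Suc k, Suc k := \<pi> ! k]"
  have tau_eq: "tau P i \<pi> = \<sigma>" using True i by (simp add: tau_def \<sigma>_def)
  define s where "s p = (if p = k then Suc k else if p = Suc k then k else p)" for p
  have length_\<sigma>: "length \<sigma> = length \<pi>" by (simp add: \<sigma>_def)
  have nth_\<sigma>: "\<sigma> ! p = \<pi> ! s p" if "p < length \<pi>" for p
    using that k by (auto simp: \<sigma>_def s_def nth_list_update)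
  have s_less: "s p < length \<pi>" if "p < length \<pi>" for p
    using that k by (auto simp: s_def)
  have order: "\<forall>p<length \<pi>. \<forall>q<length \<pi>. (\<pi> ! p, \<pi> ! q) \<in> P \<and> \<pi> ! p \<noteq> \<pi> ! q \<longrightarrow> p < q"
    using \<pi> by (simp add: lin_ext_def)
  have "p < q"
    if pq: "p < length \<sigma>" "q < length \<sigma>" "(\<sigma> ! p, \<sigma> ! q) \<in> P" "\<sigma> ! p \<noteq> \<sigma> ! q" for p q
  proof -
    have "s p < s q" using order pq length_\<sigma> nth_\<sigma> s_less by metis
    moreover have "\<not> (s p = k \<and> s q = Suc k)" "\<not> (s p = Suc k \<and> s q = k)"
      using incomp pq length_\<sigma> nth_\<sigma> by metis+
    ultimately show ?thesis unfolding s_def by (auto split: if_splits)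
  qed
  moreover have "distinct \<sigma>" "set \<sigma> = {1..n}"
    using \<pi> k by (auto simp: \<sigma>_def lin_ext_def)
  ultimately show ?thesis unfolding tau_eq lin_ext_def by auto
qed

lemma fold_tau_in_lin_ext: "\<pi> \<in> lin_ext n P \<Longrightarrow> fold (tau P) l \<pi> \<in> lin_ext n P"
  by (induction l arbitrary: \<pi>) (simp_all add: tau_in_lin_ext)

definition position_weight :: "nat list \<Rightarrow> nat" where
  "position_weight xs = (\<Sum>p<length xs. p * xs ! p)"

lemma position_weight_update:
  assumes "k < length xs"
  shows "position_weight (xs[k := x]) + k * xs ! k = position_weight xs + k * x"
proof -
  have k: "k \<in> {..<length xs}" using assms by simp
  have "(\<Sum>p\<in>{..<length xs} - {k}. p * xs[k := x] ! p) = (\<Sum>p\<in>{..<length xs} - {k}. p * xs ! p)"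
    by (rule sum.cong) auto
  then show ?thesis
    unfolding position_weight_def
    using sum.remove[OF _ k, of "\<lambda>p. p * xs[k := x] ! p"] sum.remove[OF _ k, of "\<lambda>p. p * xs ! p"] assms
    by simp
qed

lemma position_weight_swap_descent:
  assumes "Suc k < length xs" "xs ! Suc k < xs ! k"
  shows "position_weight xs < position_weight (xs[k := xs ! Suc k, Suc k := xs ! k])"
proof -
  define a b where "a = xs ! k" and "b = xs ! Suc k"
  define ys where "ys = xs[k := b]"
  have first: "position_weight ys + k * a = position_weight xs + k * b"
    using position_weight_update[of k xs b] assms by (simp add: ys_def a_def)
  have second: "position_weight (ys[Suc k := a]) + Suc k * b = position_weight ys + Suc k * a"
    using position_weight_update[of "Suc k" ys a] assms by (simp add: ys_def b_def)
  have "b < a" using assms by (simp add: a_def b_def)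
  with first second have "position_weight xs < position_weight (ys[Suc k := a])"
    by (simp add: algebra_simps)
  then show ?thesis by (simp add: ys_def a_def b_def)
qed

lemma position_weight_le:
  assumes "set xs \<subseteq> {..m}"
  shows "position_weight xs \<le> length xs * (length xs * m)"
proof -
  have "p * xs ! p \<le> length xs * m" if "p < length xs" for p
    using that assms by (intro mult_le_mono) (auto dest: nth_mem)
  then have "position_weight xs \<le> (\<Sum>p<length xs. length xs * m)"
    unfolding position_weight_def by (rule sum_mono) simp
  then show ?thesis by simp
qed

lemma lin_ext_descent_incomparable:
  assumes "natural_labeling n P" "\<pi> \<in> lin_ext n P" "Suc k < length \<pi>" "\<pi> ! Suc k < \<pi> ! k"
  shows "incomparable P (\<pi> ! k) (\<pi> ! Suc k)"
proof -
  have "(\<pi> ! k, \<pi> ! Suc k) \<notin> P"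
    using assms(1,4) unfolding natural_labeling_def by fastforce
  moreover have "(\<pi> ! Suc k, \<pi> ! k) \<notin> P"
  proof -
    have order: "\<forall>p<length \<pi>. \<forall>q<length \<pi>. (\<pi> ! p, \<pi> ! q) \<in> P \<and> \<pi> ! p \<noteq> \<pi> ! q \<longrightarrow> p < q"
      using assms(2) by (simp add: lin_ext_def)
    show ?thesis using order[rule_format, of "Suc k" k] assms(3,4) by auto
  qed
  ultimately show ?thesis by (simp add: incomparable_def)
qed

lemma lin_ext_sorted_eq_upt:
  assumes "\<pi> \<in> lin_ext n P" "sorted \<pi>"
  shows "\<pi> = [1..<Suc n]"
  using assms
  by (intro sorted_distinct_set_unique)
     (simp_all del: upt_Suc add: lin_ext_def atLeastLessThanSuc_atLeastAtMost)

lemma lin_ext_rtrancl_tau_edges_upt: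
  assumes nl: "natural_labeling n P"
  shows "\<pi> \<in> lin_ext n P \<Longrightarrow> (\<pi>, [1..<Suc n]) \<in> (tau_edges n P)\<^sup>*"
proof (induction "n * (n * n) - position_weight \<pi>" arbitrary: \<pi> rule: less_induct)
  case less
  have length_\<pi>: "length \<pi> = n" using length_lin_ext[OF less.prems] .
  show ?case
  proof (cases "sorted \<pi>")
    case True
    then show ?thesis using lin_ext_sorted_eq_upt less.prems by simp
  next
    case False
    then obtain k where k: "Suc k < n" "\<pi> ! Suc k < \<pi> ! k"
      unfolding sorted_iff_nth_Suc length_\<pi> by (meson not_le)
    define \<sigma> where "\<sigma> = tau P (Suc k) \<pi>"
    have \<sigma>_eq: "\<sigma> = \<pi>[k := \<pi> ! Suc k, Suc k := \<pi> ! k]"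
      using lin_ext_descent_incomparable[OF nl less.prems] k length_\<pi>
      by (simp add: \<sigma>_def tau_def)
    have \<sigma>: "\<sigma> \<in> lin_ext n P" unfolding \<sigma>_def by (rule tau_in_lin_ext[OF less.prems])
    have "position_weight \<pi> < position_weight \<sigma>"
      unfolding \<sigma>_eq using position_weight_swap_descent k length_\<pi> by simp
    moreover have "position_weight \<sigma> \<le> n * (n * n)"
      using position_weight_le[of \<sigma> n] \<sigma> length_lin_ext[OF \<sigma>] by (auto simp: lin_ext_def)
    ultimately have "n * (n * n) - position_weight \<sigma> < n * (n * n) - position_weight \<pi>"
      by linarith
    then have "(\<sigma>, [1..<Suc n]) \<in> (tau_edges n P)\<^sup>*"
      using less.hyps \<sigma> by blast
    moreover have "(\<pi>, \<sigma>) \<in> tau_edges n P"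
      unfolding tau_edges_def using less.prems \<sigma> k by (auto simp: \<sigma>_def)
    ultimately show ?thesis by (rule converse_rtrancl_into_rtrancl[rotated])
  qed
qed

lemma converse_tau_edges: "(tau_edges n P)\<inverse> = tau_edges n P"
proof -
  have "(\<sigma>, \<pi>) \<in> tau_edges n P" if edge: "(\<pi>, \<sigma>) \<in> tau_edges n P" for \<pi> \<sigma>
  proof -
    obtain j where "j \<in> {1..<n}" "\<sigma> = tau P j \<pi>" "\<pi> \<in> lin_ext n P" "\<sigma> \<in> lin_ext n P"
      using edge unfolding tau_edges_def by blast
    then show ?thesis unfolding tau_edges_def by (auto intro!: bexI[of _ j])
  qed
  then show ?thesis by auto
qed

lemma strongly_connected_tau_edges:
  assumes "natural_labeling n P"
  shows "strongly_connected_on (lin_ext n P) (tau_edges n P)"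
  unfolding strongly_connected_on_def
proof (intro ballI)
  fix \<pi> \<sigma> assume \<pi>: "\<pi> \<in> lin_ext n P" and \<sigma>: "\<sigma> \<in> lin_ext n P"
  have "(\<sigma>, [1..<Suc n]) \<in> (tau_edges n P)\<^sup>*"
    using lin_ext_rtrancl_tau_edges_upt[OF assms \<sigma>] .
  then have "([1..<Suc n], \<sigma>) \<in> (tau_edges n P)\<^sup>*"
    by (metis converse_tau_edges rtrancl_converseI)
  with lin_ext_rtrancl_tau_edges_upt[OF assms \<pi>] show "(\<pi>, \<sigma>) \<in> (tau_edges n P)\<^sup>*"
    by (rule rtrancl_trans)
qed

lemma rtrancl_reverse_edge_inj_finite:
  assumes "inj f" "finite A" "f ` A \<subseteq> A" "x \<in> A" and edge: "\<And>y. y \<in> A \<Longrightarrow> (y, f y) \<in> E"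
  shows "(f x, x) \<in> E\<^sup>*"
proof -
  have orbit_in_A: "(f ^^ m) x \<in> A" for m
    using assms(3,4) by (induction m) auto
  have "finite {y. \<exists>m. y = (f ^^ m) x}"
    using orbit_in_A by (auto intro: finite_subset[OF _ assms(2)])
  then obtain k where k: "k > 0" "(f ^^ k) x = x"
    using funpow_inj_finite[OF assms(1)] by blast
  have path: "(f x, (f ^^ Suc m) x) \<in> E\<^sup>*" for m
  proof (induction m)
    case (Suc m)
    have "((f ^^ Suc m) x, (f ^^ Suc (Suc m)) x) \<in> E" using edge[OF orbit_in_A[of "Suc m"]] by simp
    with Suc.IH show ?case by (rule rtrancl_into_rtrancl)
  qed simp
  show ?thesis using path[of "k - 1"] k by simp
qed

lemma promo_Suc: "j < n \<Longrightarrow> promo n P j \<pi> = promo n P (Suc j) (tau P j \<pi>)"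
  unfolding promo_def by (simp add: upt_conv_Cons)

lemma tau_edge_in_rtrancl_promo_edges:
  assumes \<pi>: "\<pi> \<in> lin_ext n P" and j: "1 \<le> j" "j < n"
  shows "(\<pi>, tau P j \<pi>) \<in> (promo_edges n P)\<^sup>*"
proof -
  let ?f = "promo n P (Suc j)"
  have maps_to: "?f ` lin_ext n P \<subseteq> lin_ext n P"
    unfolding promo_def using fold_tau_in_lin_ext by blast
  have \<tau>\<pi>: "tau P j \<pi> \<in> lin_ext n P" using tau_in_lin_ext[OF \<pi>] .
  have "(\<pi>, ?f (tau P j \<pi>)) \<in> promo_edges n P"
    unfolding promo_edges_def using \<pi> \<tau>\<pi> maps_to j promo_Suc[of j n P \<pi>] by force
  moreover have "(?f (tau P j \<pi>), tau P j \<pi>) \<in> (promo_edges n P)\<^sup>*"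
  proof (rule rtrancl_reverse_edge_inj_finite[OF _ finite_lin_ext maps_to \<tau>\<pi>])
    show "inj ?f" unfolding promo_def by (rule inj_fold_tau)
    show "(\<sigma>, ?f \<sigma>) \<in> promo_edges n P" if "\<sigma> \<in> lin_ext n P" for \<sigma>
      unfolding promo_edges_def using that maps_to j by force
  qed
  ultimately show ?thesis by (rule converse_rtrancl_into_rtrancl)
qed

lemma strongly_connected_on_rtrancl_mono:
  assumes "strongly_connected_on V E" "E \<subseteq> F\<^sup>*"
  shows "strongly_connected_on V F"
  using assms rtrancl_subset_rtrancl unfolding strongly_connected_on_def by blast

theorem proposition4p1:
  fixes n :: nat and P :: "(nat \<times> nat) set"
  assumes "partial_order_on {1..n} P"
    and "natural_labeling n P"
  shows "strongly_connected_on (lin_ext n P) (promo_edges n P)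
       \<and> strongly_connected_on (lin_ext n P) (tau_edges n P)"
proof
  show tau: "strongly_connected_on (lin_ext n P) (tau_edges n P)"
    using strongly_connected_tau_edges[OF assms(2)] .
  have "tau_edges n P \<subseteq> (promo_edges n P)\<^sup>*"
    unfolding tau_edges_def using tau_edge_in_rtrancl_promo_edges by force
  with tau show "strongly_connected_on (lin_ext n P) (promo_edges n P)"
    by (rule strongly_connected_on_rtrancl_mono)
qed

end
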